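(* Let $(W,S)$ be an irreducible right-angled Coxeter system and let $w\in W$. Suppose $t_1,\dots,t_n\in S$ satisfy (1) $t_1\notin S(w)$, (2) $o(t_it_{i+1})=\infty$ for all $i\in\{1,\dots,n-1\}$, and (3) $\{t_1,\dots,t_n\}=S$. Then $w t_1t_2\cdots t_n\in W^{\{t_n\}}$.
   Context: A Coxeter system $(W,S)$: $S$ finite, $W=\langle S\mid (st)^{m(s,t)}=1\rangle$ with $m(s,s)=1$, $m(s,t)=m(t,s)\ge2$ for $s\ne t$. Right-angled: $m(s,t)\in\{2,\infty\}$ for $s\ne t$. Irreducible: for no nonempty proper $T\subset S$ is $W=W_T\times W_{S\setminus T}$. $o(st)$ is the order of $st$; $\ell$ is word length with respect to $S$; $S(w)=\{s\in S\mid\ell(ws)<\ell(w)\}$; $W^T=\{w\in W\mid S(w)=T\}$. *)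

theory Defs
  imports Main "HOL-Library.Extended_Nat"
begin

definition coxeter_matrix :: "'a set \<Rightarrow> ('a \<Rightarrow> 'a \<Rightarrow> enat) \<Rightarrow> bool" where
  "coxeter_matrix S m \<longleftrightarrow> finite S \<and> (\<forall>s\<in>S. m s s = 1) \<and>
     (\<forall>s\<in>S. \<forall>t\<in>S. m s t = m t s) \<and> (\<forall>s\<in>S. \<forall>t\<in>S. s \<noteq> t \<longrightarrow> m s t \<ge> 2)"

definition right_angled :: "'a set \<Rightarrow> ('a \<Rightarrow> 'a \<Rightarrow> enat) \<Rightarrow> bool" where
  "right_angled S m \<longleftrightarrow> (\<forall>s\<in>S. \<forall>t\<in>S. s \<noteq> t \<longrightarrow> m s t = 2 \<or> m s t = \<infinity>)"

text \<open>Elements of W are represented by words over S; two words represent the same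
  element iff they are related by the congruence generated by the relations (st)^m(s,t) = 1.\<close>
inductive cox_eq :: "'a set \<Rightarrow> ('a \<Rightarrow> 'a \<Rightarrow> enat) \<Rightarrow> 'a list \<Rightarrow> 'a list \<Rightarrow> bool"
  for S m where
  rel: "s \<in> S \<Longrightarrow> t \<in> S \<Longrightarrow> m s t = enat k \<Longrightarrow>
        cox_eq S m (xs @ concat (replicate k [s, t]) @ ys) (xs @ ys)"
| refl: "cox_eq S m u u"
| sym: "cox_eq S m u v \<Longrightarrow> cox_eq S m v u"
| trans: "cox_eq S m u v \<Longrightarrow> cox_eq S m v w \<Longrightarrow> cox_eq S m u w"

definition cox_len :: "'a set \<Rightarrow> ('a \<Rightarrow> 'a \<Rightarrow> enat) \<Rightarrow> 'a list \<Rightarrow> nat" where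
  "cox_len S m w = (LEAST n. \<exists>v. set v \<subseteq> S \<and> length v = n \<and> cox_eq S m v w)"

definition cox_desc :: "'a set \<Rightarrow> ('a \<Rightarrow> 'a \<Rightarrow> enat) \<Rightarrow> 'a list \<Rightarrow> 'a set" where
  "cox_desc S m w = {s \<in> S. cox_len S m (w @ [s]) < cox_len S m w}"

definition cox_WT :: "'a set \<Rightarrow> ('a \<Rightarrow> 'a \<Rightarrow> enat) \<Rightarrow> 'a set \<Rightarrow> 'a list set" where
  "cox_WT S m T = {w. set w \<subseteq> S \<and> cox_desc S m w = T}"

definition cox_order_inf :: "'a set \<Rightarrow> ('a \<Rightarrow> 'a \<Rightarrow> enat) \<Rightarrow> 'a \<Rightarrow> 'a \<Rightarrow> bool" where
  "cox_order_inf S m s t \<longleftrightarrow> (\<forall>k>0. \<not> cox_eq S m (concat (replicate k [s, t])) [])"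

text \<open>Irreducible: for no nonempty proper T \<subset> S is W the (internal) direct product
  W_T \<times> W_{S-T}, i.e. the two standard parabolic subgroups (which together generate W)
  commute elementwise and intersect trivially.\<close>
definition cox_irreducible :: "'a set \<Rightarrow> ('a \<Rightarrow> 'a \<Rightarrow> enat) \<Rightarrow> bool" where
  "cox_irreducible S m \<longleftrightarrow> \<not> (\<exists>T. T \<noteq> {} \<and> T \<subset> S \<and>
     (\<forall>u v. set u \<subseteq> T \<longrightarrow> set v \<subseteq> S - T \<longrightarrow> cox_eq S m (u @ v) (v @ u)) \<and>
     (\<forall>u v. set u \<subseteq> T \<longrightarrow> set v \<subseteq> S - T \<longrightarrow> cox_eq S m u v \<longrightarrow> cox_eq S m u []))"

end

(*
  Walk along t: by induction, w t_1 ... t_i has t_i as a descent and no other descent among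
  t_1, ..., t_i.  The next letter t_{i+1} is an ascent, since t_i is a descent and two descents
  r, s of an element always satisfy o(rs) < \<infinity>.  After appending an ascent s, every other new
  descent r commutes with s and was a descent before (in the right-angled case the reflection
  x r x^-1 is unchanged by s), so it lies outside {t_1, ..., t_{i+1}}.  Since the t_i exhaust S,
  only t_n remains.

  Both facts about descents are proved from scratch for words: descents are detected by Tits'
  reflection cocycle N (s is a descent of x iff x s x^-1 \<in> N(x)), which yields the exchange
  condition; and two descents r, s with m(r,s) = \<infinity> would give reduced words of y ending in
  arbitrarily long alternating words r s r s ..., which the homomorphism onto the infinite
  dihedral group W_{r,s} excludes.
*)
theory Submission
  imports Defs
begin

lemma concat_replicate_commute: "concat (replicate k xs) @ xs = xs @ concat (replicate k xs)"
  by (induction k) simp_all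

lemma rev_concat_replicate_pair:
  "rev (concat (replicate k [s, t])) = concat (replicate k [t, s])"
  by (induction k) (simp_all flip: concat_replicate_commute)

definition remove_nth :: "nat \<Rightarrow> 'a list \<Rightarrow> 'a list" where
  "remove_nth i xs = take i xs @ drop (Suc i) xs"

lemma length_remove_nth: "i < length xs \<Longrightarrow> length (remove_nth i xs) = length xs - 1"
  by (simp add: remove_nth_def)

lemma set_remove_nth_subset: "set (remove_nth i xs) \<subseteq> set xs"
  by (auto simp: remove_nth_def dest: in_set_takeD in_set_dropD)

lemma remove_nth_append:
  "remove_nth i (xs @ ys) =
     (if i < length xs then remove_nth i xs @ ys else xs @ remove_nth (i - length xs) ys)"
  by (simp add: remove_nth_def Suc_diff_le)

lemma successivelyI_nth:
  "(\<And>i. Suc i < length xs \<Longrightarrow> P (xs ! i) (xs ! Suc i)) \<Longrightarrow> successively P xs"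
proof (induction P xs rule: successively.induct)
  case (3 P x y xs)
  have "P x y" using "3.prems"[of 0] by simp
  moreover have "successively P (y # xs)"
    using "3.prems"[of "Suc i" for i] by (intro "3.IH") auto
  ultimately show ?case by simp
qed simp_all

lemma cox_eq_append_cong:
  "cox_eq S m u v \<Longrightarrow> cox_eq S m (a @ u @ b) (a @ v @ b)"
proof (induction rule: cox_eq.induct)
  case (rel s t k xs ys)
  then show ?case using cox_eq.rel[of s S t m k "a @ xs" "ys @ b"] by simp
qed (meson cox_eq.refl cox_eq.sym cox_eq.trans)+

lemma cox_eq_append:
  "cox_eq S m u u' \<Longrightarrow> cox_eq S m v v' \<Longrightarrow> cox_eq S m (u @ v) (u' @ v')"
  using cox_eq_append_cong[of S m u u' "[]" v] cox_eq_append_cong[of S m v v' u' "[]"]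
  by (auto intro: cox_eq.trans)

text \<open>Words over \<open>S\<close> are products of involutions, so \<open>rev a\<close> represents the inverse of \<open>a\<close>
  and \<open>conj_words a A\<close> is the conjugate \<open>a A a\<^sup>-\<^sup>1\<close>.\<close>
definition conj_words :: "'a list \<Rightarrow> 'a list set \<Rightarrow> 'a list set" where
  "conj_words a A = {v. rev a @ v @ a \<in> A}"

lemma conj_words_sym_diff: "conj_words a (sym_diff A B) = sym_diff (conj_words a A) (conj_words a B)"
  by (auto simp: conj_words_def)

lemma conj_words_append: "conj_words (a @ b) A = conj_words a (conj_words b A)"
  by (simp add: conj_words_def)

lemma conj_words_Nil [simp]: "conj_words [] A = A" "conj_words a {} = {}"
  by (simp_all add: conj_words_def)

definition prefix_reflection :: "'a list \<Rightarrow> nat \<Rightarrow> 'a list" where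
  "prefix_reflection x i = take i x @ [x ! i] @ rev (take i x)"

locale coxeter_system =
  fixes S :: "'a set" and m :: "'a \<Rightarrow> 'a \<Rightarrow> enat"
  assumes coxeter_matrix: "coxeter_matrix S m"
begin

abbreviation cox_equiv :: "'a list \<Rightarrow> 'a list \<Rightarrow> bool" (infix "\<simeq>" 50)
  where "u \<simeq> v \<equiv> cox_eq S m u v"

declare cox_eq.trans [trans]

lemma coxeter_matrix_sym: "s \<in> S \<Longrightarrow> t \<in> S \<Longrightarrow> m s t = m t s"
  using coxeter_matrix unfolding coxeter_matrix_def by auto

lemma square_equiv_Nil: "s \<in> S \<Longrightarrow> [s, s] \<simeq> []"
  using coxeter_matrix cox_eq.rel[of s S s m 1 "[]" "[]"]
  by (simp add: coxeter_matrix_def one_enat_def)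

lemma snoc_square_equiv: "s \<in> S \<Longrightarrow> x @ [s, s] \<simeq> x"
  using cox_eq_append[OF cox_eq.refl[of S m x] square_equiv_Nil] by simp

lemma append_rev_equiv_Nil: "set u \<subseteq> S \<Longrightarrow> u @ rev u \<simeq> []"
proof (induction u)
  case (Cons x u)
  then have "[x] @ (u @ rev u) @ [x] \<simeq> [x] @ [] @ [x]"
    by (intro cox_eq_append_cong) auto
  then show ?case using square_equiv_Nil[of x] Cons.prems by (auto intro: cox_eq.trans)
qed (simp add: cox_eq.refl)

lemma rev_append_equiv_Nil: "set u \<subseteq> S \<Longrightarrow> rev u @ u \<simeq> []"
  using append_rev_equiv_Nil[of "rev u"] by simp

lemma cox_eq_cancel_left:
  assumes "set u \<subseteq> S" and "u @ a \<simeq> u @ b"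
  shows "a \<simeq> b"
proof -
  have "(rev u @ u) @ a \<simeq> (rev u @ u) @ b"
    using cox_eq_append[OF cox_eq.refl assms(2), of "rev u"] by simp
  then show ?thesis
    using cox_eq_append[OF rev_append_equiv_Nil[OF assms(1)] cox_eq.refl]
    by simp (meson cox_eq.sym cox_eq.trans)
qed

lemma cox_eq_cancel_right:
  assumes "set u \<subseteq> S" and "a @ u \<simeq> b @ u"
  shows "a \<simeq> b"
proof -
  have "a @ (u @ rev u) \<simeq> b @ (u @ rev u)"
    using cox_eq_append[OF assms(2) cox_eq.refl, of "rev u"] by simp
  then show ?thesis
    using cox_eq_append[OF cox_eq.refl append_rev_equiv_Nil[OF assms(1)]]
    by simp (meson cox_eq.sym cox_eq.trans)
qed

lemma cox_eq_rev: "u \<simeq> v \<Longrightarrow> rev u \<simeq> rev v"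
proof (induction rule: cox_eq.induct)
  case (rel s t k xs ys)
  then have "m t s = enat k" using coxeter_matrix_sym by simp
  with rel show ?case
    using cox_eq.rel[of t S s m k "rev ys" "rev xs"] by (simp add: rev_concat_replicate_pair)
qed (meson cox_eq.refl cox_eq.sym cox_eq.trans)+

lemma cox_eq_even_length: "u \<simeq> v \<Longrightarrow> even (length u) = even (length v)"
proof (induction rule: cox_eq.induct)
  case (rel s t k xs ys)
  have "length (concat (replicate k [s, t])) = 2 * k" by (induction k) auto
  then show ?case by simp
qed auto

lemma cox_len_le: "set v \<subseteq> S \<Longrightarrow> v \<simeq> w \<Longrightarrow> cox_len S m w \<le> length v"
  unfolding cox_len_def by (rule Least_le) blast

lemma reduced_word_exists:
  assumes "set w \<subseteq> S"
  obtains v where "set v \<subseteq> S" "length v = cox_len S m w" "v \<simeq> w"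
proof -
  have "\<exists>v. set v \<subseteq> S \<and> length v = cox_len S m w \<and> v \<simeq> w"
    unfolding cox_len_def by (rule LeastI_ex) (use assms cox_eq.refl in blast)
  then show ?thesis using that by blast
qed

lemma cox_len_cong: "u \<simeq> v \<Longrightarrow> cox_len S m u = cox_len S m v"
  unfolding cox_len_def by (metis cox_eq.sym cox_eq.trans)

lemma cox_desc_cong: "u \<simeq> v \<Longrightarrow> cox_desc S m u = cox_desc S m v"
  unfolding cox_desc_def using cox_len_cong cox_eq_append[OF _ cox_eq.refl] by metis

lemma cox_len_snoc_neq:
  assumes "set x \<subseteq> S" and "s \<in> S"
  shows "cox_len S m (x @ [s]) \<noteq> cox_len S m x"
proof -
  obtain v where v: "set v \<subseteq> S" "length v = cox_len S m x" "v \<simeq> x"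
    using reduced_word_exists assms(1) .
  obtain v' where v': "set v' \<subseteq> S" "length v' = cox_len S m (x @ [s])" "v' \<simeq> x @ [s]"
    using reduced_word_exists[of "x @ [s]"] assms by auto
  have "v' \<simeq> v @ [s]"
    using v'(3) cox_eq_append[OF v(3) cox_eq.refl] by (meson cox_eq.sym cox_eq.trans)
  then show ?thesis using cox_eq_even_length v v' by fastforce
qed

lemma ascent_snoc_descent:
  assumes "set x \<subseteq> S" and "s \<in> S" and "s \<notin> cox_desc S m x"
  shows "s \<in> cox_desc S m (x @ [s])"
proof -
  have "cox_len S m x < cox_len S m (x @ [s])"
    using assms cox_len_snoc_neq unfolding cox_desc_def by fastforce
  moreover have "cox_len S m ((x @ [s]) @ [s]) = cox_len S m x"
    using cox_len_cong[OF snoc_square_equiv] assms(2) by simp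
  ultimately show ?thesis using assms(2) unfolding cox_desc_def by simp
qed

lemma cox_order_inf_imp_infinite:
  assumes "s \<in> S" and "t \<in> S" and "cox_order_inf S m s t"
  shows "m s t = \<infinity>"
proof (rule ccontr)
  assume "m s t \<noteq> \<infinity>"
  then obtain k where k: "m s t = enat k" by auto
  moreover have "1 \<le> m s t"
    using coxeter_matrix assms(1,2) unfolding coxeter_matrix_def
    by (cases "s = t") (simp, meson one_le_numeral order.trans)
  ultimately have "k \<noteq> 0" by (simp add: one_enat_def)
  moreover have "concat (replicate k [s, t]) \<simeq> []"
    using cox_eq.rel[of s S t m k "[]" "[]"] assms(1,2) k by simp
  ultimately show False using assms(3) unfolding cox_order_inf_def by blast
qed

lemma cox_eq_move_right:
  assumes "set y \<subseteq> S" and "x \<simeq> z @ y"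
  shows "x @ rev y \<simeq> z"
proof -
  have "x @ rev y \<simeq> z @ (y @ rev y)"
    using cox_eq_append[OF assms(2) cox_eq.refl, of "rev y"] by simp
  then show ?thesis
    using cox_eq_append[OF cox_eq.refl append_rev_equiv_Nil[OF assms(1)], of z]
    by simp (meson cox_eq.trans)
qed

lemma commuting_conj_equiv: "s \<in> S \<Longrightarrow> t \<in> S \<Longrightarrow> m s t = 2 \<Longrightarrow> [s, t, s] \<simeq> [t]"
  using cox_eq.rel[of s S t m 2 "[]" "[]"] cox_eq_move_right[of "[t]" "[]" "[s, t, s]"]
  by (simp add: numeral_eq_enat numeral_2_eq_2) (meson cox_eq.sym)

definition cox_class :: "'a list \<Rightarrow> 'a list set" where
  "cox_class u = {v. u \<simeq> v}"

lemma cox_class_cong: "u \<simeq> v \<Longrightarrow> cox_class u = cox_class v"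
  unfolding cox_class_def by (rule Collect_cong) (meson cox_eq.sym cox_eq.trans)

text \<open>Tits' reflection cocycle \<open>N(s x) = {s} \<triangle> s N(x) s\<close>; a reflection is represented by the
  set of all words equal to it in \<open>W\<close>.\<close>
fun inversions :: "'a list \<Rightarrow> 'a list set" where
  "inversions [] = {}"
| "inversions (s # x) = sym_diff (cox_class [s]) (conj_words [s] (inversions x))"

lemma inversions_singleton: "inversions [s] = cox_class [s]"
  by simp

lemma inversions_append:
  "inversions (a @ y) = sym_diff (inversions a) (conj_words a (inversions y))"
  by (induction a) (auto simp: conj_words_def)

lemma conj_words_cox_class:
  assumes "set a \<subseteq> S"
  shows "conj_words a (cox_class u) = cox_class (a @ u @ rev a)"
proof -
  have "u \<simeq> rev a @ v @ a \<longleftrightarrow> a @ u @ rev a \<simeq> v" for v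
  proof
    assume "u \<simeq> rev a @ v @ a"
    then have "a @ u @ rev a \<simeq> (a @ rev a) @ v @ (a @ rev a)"
      using cox_eq_append_cong by fastforce
    moreover have "(a @ rev a) @ v @ (a @ rev a) \<simeq> [] @ v @ []"
      using cox_eq_append[OF append_rev_equiv_Nil cox_eq_append[OF cox_eq.refl append_rev_equiv_Nil]]
        assms by blast
    ultimately show "a @ u @ rev a \<simeq> v" by (simp add: cox_eq.trans)
  next
    assume "a @ u @ rev a \<simeq> v"
    then have "(rev a @ a) @ u @ (rev a @ a) \<simeq> rev a @ v @ a"
      using cox_eq_append_cong by fastforce
    moreover have "(rev a @ a) @ u @ (rev a @ a) \<simeq> [] @ u @ []"
      using cox_eq_append[OF rev_append_equiv_Nil cox_eq_append[OF cox_eq.refl rev_append_equiv_Nil]]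
        assms by blast
    ultimately show "u \<simeq> rev a @ v @ a" by simp (meson cox_eq.sym cox_eq.trans)
  qed
  then show ?thesis by (simp add: conj_words_def cox_class_def)
qed

lemma inversions_snoc:
  "set x \<subseteq> S \<Longrightarrow> inversions (x @ [s]) = sym_diff (inversions x) (cox_class (x @ [s] @ rev x))"
  by (simp add: inversions_append conj_words_cox_class)

lemma inversions_cox_eq_closed: "u \<simeq> v \<Longrightarrow> u \<in> inversions x \<longleftrightarrow> v \<in> inversions x"
proof (induction x arbitrary: u v)
  case (Cons s x)
  have "[s] @ u @ [s] \<in> inversions x \<longleftrightarrow> [s] @ v @ [s] \<in> inversions x"
    using Cons.IH[OF cox_eq_append_cong[OF Cons.prems]] .
  moreover have "[s] \<simeq> u \<longleftrightarrow> [s] \<simeq> v" using Cons.prems by (meson cox_eq.sym cox_eq.trans)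
  ultimately show ?case by (auto simp: cox_class_def conj_words_def)
qed simp

lemma inversions_prefix_reflection:
  "set x \<subseteq> S \<Longrightarrow> v \<in> inversions x \<Longrightarrow> \<exists>i<length x. prefix_reflection x i \<simeq> v"
proof (induction x arbitrary: v rule: rev_induct)
  case (snoc s x)
  have "v \<in> inversions x \<or> v \<in> cox_class (x @ [s] @ rev x)"
    using snoc.prems inversions_snoc[of x s] by auto
  then show ?case
  proof
    assume "v \<in> inversions x"
    then obtain i where "i < length x" "prefix_reflection x i \<simeq> v"
      using snoc.IH snoc.prems(1) by auto
    moreover have "prefix_reflection (x @ [s]) i = prefix_reflection x i"
      using \<open>i < length x\<close> by (simp add: prefix_reflection_def nth_append)
    ultimately show ?thesis by (intro exI[of _ i]) auto
  next
    assume "v \<in> cox_class (x @ [s] @ rev x)"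
    moreover have "prefix_reflection (x @ [s]) (length x) = x @ [s] @ rev x"
      by (simp add: prefix_reflection_def)
    ultimately show ?thesis by (intro exI[of _ "length x"]) (simp add: cox_class_def)
  qed
qed simp

text \<open>If \<open>x s x\<^sup>-\<^sup>1\<close> equals the reflection \<open>p l p\<^sup>-\<^sup>1\<close> attached to the letter \<open>l\<close> of
  \<open>x = p l q\<close>, then \<open>s = q\<^sup>-\<^sup>1 l q\<close>, hence \<open>x s = p q\<close>.\<close>
lemma prefix_reflection_deletion:
  assumes "set x \<subseteq> S" and "s \<in> S" and "i < length x"
    and "prefix_reflection x i \<simeq> x @ [s] @ rev x"
  shows "x @ [s] \<simeq> remove_nth i x"
proof -
  define p l q where "p = take i x" and "l = x ! i" and "q = drop (Suc i) x"
  have x: "x = p @ [l] @ q"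
    unfolding p_def l_def q_def using id_take_nth_drop[OF assms(3)] by simp
  have S: "set p \<subseteq> S" "l \<in> S" "set q \<subseteq> S" using assms(1) unfolding x by auto
  have "prefix_reflection x i = ((p @ [l]) @ []) @ rev p"
    unfolding prefix_reflection_def p_def l_def by simp
  moreover have "x @ [s] @ rev x = ((p @ [l]) @ (q @ [s] @ rev q @ [l])) @ rev p"
    unfolding x by simp
  ultimately have conj_eq: "((p @ [l]) @ []) @ rev p \<simeq> ((p @ [l]) @ (q @ [s] @ rev q @ [l])) @ rev p"
    using assms(4) by simp
  have "(p @ [l]) @ [] \<simeq> (p @ [l]) @ (q @ [s] @ rev q @ [l])"
    using cox_eq_cancel_right[OF _ conj_eq] S(1) by simp
  from cox_eq_cancel_left[OF _ this] have "[] \<simeq> (q @ [s] @ rev q) @ [l]"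
    using S(1,2) by simp
  from cox_eq_move_right[OF _ this] have "[l] \<simeq> (q @ [s]) @ rev q"
    using S(2) by simp
  then have "[l] @ q \<simeq> q @ [s]"
    using cox_eq_move_right[of "rev q" "[l]" "q @ [s]"] S(3) by simp
  then have "p @ [l] @ q @ [s] \<simeq> p @ [l] @ ([l] @ q)"
    using cox_eq_append_cong[OF cox_eq.sym, of S m "[l] @ q" "q @ [s]" "p @ [l]" "[]"] by simp
  moreover have "p @ [l, l] @ q \<simeq> p @ [] @ q"
    using cox_eq_append_cong[OF square_equiv_Nil] S(2) by blast
  moreover have "remove_nth i x = p @ q"
    unfolding remove_nth_def p_def q_def ..
  ultimately show ?thesis
    unfolding x by simp (meson cox_eq.trans)
qed

lemma exchange_condition:
  assumes "set x \<subseteq> S" and "s \<in> S" and "x @ [s] @ rev x \<in> inversions x"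
  shows "\<exists>i<length x. x @ [s] \<simeq> remove_nth i x"
  using inversions_prefix_reflection[OF assms(1,3)] prefix_reflection_deletion[OF assms(1,2)]
  by blast

end

text \<open>The infinite dihedral group as the affine maps \<open>x \<mapsto> \<plusminus>x + c\<close> of \<open>\<int>\<close>:
  \<open>(True, c)\<close> is \<open>x \<mapsto> c - x\<close>, \<open>(False, c)\<close> is \<open>x \<mapsto> x + c\<close>,
  and \<open>dih_mult a b\<close> is \<open>a \<circ> b\<close>.\<close>
definition dih_mult :: "bool \<times> int \<Rightarrow> bool \<times> int \<Rightarrow> bool \<times> int" where
  "dih_mult a b = (fst a \<noteq> fst b, (if fst a then - snd b else snd b) + snd a)"

definition dih_gen :: "'a \<Rightarrow> 'a \<Rightarrow> 'a \<Rightarrow> bool \<times> int" where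
  "dih_gen r s x = (if x = r then (True, 0) else if x = s then (True, 1) else (False, 0))"

fun dih_word :: "'a \<Rightarrow> 'a \<Rightarrow> 'a list \<Rightarrow> bool \<times> int" where
  "dih_word r s [] = (False, 0)"
| "dih_word r s (x # xs) = dih_mult (dih_gen r s x) (dih_word r s xs)"

text \<open>Word length in the infinite dihedral group with respect to its generators
  \<open>x \<mapsto> -x\<close> and \<open>x \<mapsto> 1 - x\<close>.\<close>
definition dih_length :: "bool \<times> int \<Rightarrow> int" where
  "dih_length a = (if fst a then \<bar>2 * snd a - 1\<bar> else 2 * \<bar>snd a\<bar>)"

lemma dih_mult_assoc: "dih_mult a (dih_mult b c) = dih_mult (dih_mult a b) c"
  by (cases a; cases b; cases c) (auto simp: dih_mult_def algebra_simps)

lemma dih_mult_neutral [simp]: "dih_mult (False, 0) a = a" "dih_mult a (False, 0) = a"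
  by (cases a; simp add: dih_mult_def)+

lemma dih_word_append: "dih_word r s (u @ v) = dih_mult (dih_word r s u) (dih_word r s v)"
  by (induction u) (simp_all add: dih_mult_assoc)

lemma dih_length_dih_word_le: "dih_length (dih_word r s v) \<le> int (length v)"
proof (induction v)
  case (Cons x v)
  obtain f c where "dih_word r s v = (f, c)" by fastforce
  moreover have "dih_length (dih_mult (dih_gen r s x) (f, c)) \<le> dih_length (f, c) + 1"
    unfolding dih_gen_def dih_mult_def dih_length_def by (auto simp: abs_if)
  ultimately show ?case using Cons by simp
qed (simp add: dih_length_def)

fun alternating :: "'a \<Rightarrow> 'a \<Rightarrow> nat \<Rightarrow> 'a list" where
  "alternating c d 0 = []"
| "alternating c d (Suc n) = alternating d c n @ [c]"

lemma length_alternating [simp]: "length (alternating c d n) = n"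
  by (induction n arbitrary: c d) auto

lemma set_alternating: "set (alternating c d n) \<subseteq> {c, d}"
  by (induction n arbitrary: c d) auto

lemma dih_word_alternating:
  assumes "r \<noteq> s"
  shows "dih_word r s (alternating r s n) =
           (odd n, if odd n then - int (n div 2) else int (n div 2))"
    and "dih_word r s (alternating s r n) =
           (odd n, if odd n then int (n div 2) + 1 else - int (n div 2))"
proof (induction n)
  case (Suc n)
  case 1 show ?case
    using Suc(2) assms by (auto simp: dih_word_append dih_gen_def dih_mult_def elim: oddE)
next
  case (Suc n)
  case 2 show ?case
    using Suc(1) assms by (auto simp: dih_word_append dih_gen_def dih_mult_def elim: oddE)
qed simp_all

lemma dih_length_alternating: "r \<noteq> s \<Longrightarrow> dih_length (dih_word r s (alternating r s n)) = int n"
  by (auto simp: dih_word_alternating dih_length_def elim: oddE evenE)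

locale right_angled_coxeter_system = coxeter_system +
  assumes right_angled: "right_angled S m"
begin

lemma relator_cases:
  assumes "s \<in> S" and "t \<in> S" and "m s t = enat k"
  obtains "s = t" and "concat (replicate k [s, t]) = [s, s]"
  | "s \<noteq> t" and "m s t = 2" and "concat (replicate k [s, t]) = [s, t, s, t]"
proof -
  have "(s = t \<and> k = 1) \<or> (s \<noteq> t \<and> k = 2)"
    using coxeter_matrix right_angled assms unfolding coxeter_matrix_def right_angled_def
    by (metis enat.distinct(1) numeral_eq_enat enat.inject one_enat_def)
  then show ?thesis
    using that assms(3) by (auto simp: numeral_2_eq_2 numeral_eq_enat)
qed

lemma cox_eq_even_count: "u \<simeq> v \<Longrightarrow> even (count_list u r) = even (count_list v r)"
proof (induction rule: cox_eq.induct)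
  case (rel s t k xs ys)
  then show ?case by (rule relator_cases) auto
qed auto

lemma singleton_cox_eq_imp_eq: "[r] \<simeq> [s] \<Longrightarrow> r = s"
  using cox_eq_even_count[of "[r]" "[s]" r] by (auto split: if_splits)

lemma inversions_relator:
  assumes "s \<in> S" and "t \<in> S" and "m s t = enat k"
  shows "inversions (concat (replicate k [s, t])) = {}"
proof (rule relator_cases[OF assms])
  assume relator: "concat (replicate k [s, t]) = [s, s]"
  have "inversions [s, s] = sym_diff (cox_class [s]) (cox_class [s, s, s])"
    using inversions_snoc[of "[s]" s] assms(1) by simp
  moreover have "cox_class [s, s, s] = cox_class [s]"
    using cox_class_cong[OF snoc_square_equiv[of s "[s]"]] assms(1) by simp
  ultimately show ?thesis unfolding relator by simp
next
  assume "m s t = 2" and relator: "concat (replicate k [s, t]) = [s, t, s, t]"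
  have stst: "[s, t, s, t] \<simeq> []"
    using cox_eq.rel[of s S t m k "[]" "[]"] assms relator by simp
  have sts: "[s, t, s] \<simeq> [t]"
    using commuting_conj_equiv \<open>m s t = 2\<close> assms(1,2) by blast
  have "[s, t, s, t] @ [s] \<simeq> [] @ [s]" and "[s, t, s, t] @ [s, t, s] \<simeq> [] @ [t]"
    using cox_eq_append[OF stst] cox_eq.refl sts by blast+
  then have "cox_class [s, t, s, t, s] = cox_class [s]"
    and "cox_class [s, t, s, t, s, t, s] = cox_class [t]"
    using cox_class_cong by simp_all
  moreover have "inversions [s, t, s, t] = sym_diff (sym_diff (sym_diff (cox_class [s])
      (cox_class [s, t, s])) (cox_class [s, t, s, t, s])) (cox_class [s, t, s, t, s, t, s])"
    using inversions_snoc[of "[s]" t] inversions_snoc[of "[s, t]" s]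
      inversions_snoc[of "[s, t, s]" t] assms(1,2)
    by (simp del: inversions.simps add: inversions_singleton)
  ultimately show ?thesis
    unfolding relator using cox_class_cong[OF sts] by auto
qed

lemma inversions_cong: "u \<simeq> v \<Longrightarrow> inversions u = inversions v"
proof (induction rule: cox_eq.induct)
  case (rel s t k xs ys)
  define b where "b = concat (replicate k [s, t])"
  have "b \<simeq> []"
    using cox_eq.rel[of s S t m k "[]" "[]"] rel unfolding b_def by simp
  then have "rev b @ v @ b \<simeq> [] @ v @ []" for v
    using cox_eq_append[OF cox_eq_rev cox_eq_append[OF cox_eq.refl]] by fastforce
  then have "conj_words b (inversions ys) = inversions ys"
    unfolding conj_words_def using inversions_cox_eq_closed by auto
  then have "inversions (b @ ys) = inversions ys"
    using inversions_append[of b ys] inversions_relator[OF rel] unfolding b_def by simp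
  then show ?case
    using inversions_append[of xs "b @ ys"] inversions_append[of xs ys] unfolding b_def by simp
qed simp_all

lemma inversion_imp_descent:
  assumes "set x \<subseteq> S" and "s \<in> S" and "x @ [s] @ rev x \<in> inversions x"
  shows "s \<in> cox_desc S m x"
proof -
  obtain v where v: "set v \<subseteq> S" "length v = cox_len S m x" "v \<simeq> x"
    using reduced_word_exists assms(1) .
  have "x @ [s] @ rev x \<simeq> v @ [s] @ rev v"
    using cox_eq_append[OF cox_eq.sym[OF v(3)] cox_eq_append[OF cox_eq.refl[of S m "[s]"]
        cox_eq_rev[OF cox_eq.sym[OF v(3)]]]] .
  moreover have "x @ [s] @ rev x \<in> inversions v"
    using assms(3) inversions_cong[OF v(3)] by simp
  ultimately have "v @ [s] @ rev v \<in> inversions v"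
    using inversions_cox_eq_closed by metis
  then obtain i where i: "i < length v" "v @ [s] \<simeq> remove_nth i v"
    using exchange_condition[OF v(1) assms(2)] by blast
  have "remove_nth i v \<simeq> x @ [s]"
    using cox_eq.trans[OF cox_eq.sym[OF i(2)] cox_eq_append[OF v(3) cox_eq.refl]] .
  moreover have "set (remove_nth i v) \<subseteq> S"
    using set_remove_nth_subset v(1) by (rule order.trans)
  ultimately have "cox_len S m (x @ [s]) \<le> length (remove_nth i v)"
    by (intro cox_len_le)
  also have "\<dots> < cox_len S m x"
    using i(1) v(2) by (simp add: length_remove_nth)
  finally show ?thesis using assms(2) unfolding cox_desc_def by simp
qed

lemma descent_iff_inversion:
  assumes "set x \<subseteq> S" and "s \<in> S"
  shows "s \<in> cox_desc S m x \<longleftrightarrow> x @ [s] @ rev x \<in> inversions x"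
proof
  assume "s \<in> cox_desc S m x"
  then have shorter: "cox_len S m (x @ [s]) < cox_len S m x"
    unfolding cox_desc_def by simp
  define z where "z = x @ [s]"
  have z: "set z \<subseteq> S" using assms unfolding z_def by simp
  have "z @ [s] @ rev z \<notin> inversions z"
  proof
    assume "z @ [s] @ rev z \<in> inversions z"
    then have "cox_len S m (z @ [s]) < cox_len S m z"
      using inversion_imp_descent[OF z assms(2)] unfolding cox_desc_def by simp
    moreover have "cox_len S m (z @ [s]) = cox_len S m x"
      using cox_len_cong[OF snoc_square_equiv[OF assms(2)]] unfolding z_def by simp
    ultimately show False using shorter unfolding z_def by simp
  qed
  moreover have "z @ [s] @ rev z \<simeq> x @ [s] @ rev x"
    using cox_eq_append_cong[OF square_equiv_Nil[OF assms(2)], of x "[s] @ rev x"]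
    unfolding z_def by simp
  ultimately have "x @ [s] @ rev x \<notin> inversions z"
    using inversions_cox_eq_closed by blast
  moreover have "x @ [s] @ rev x \<in> cox_class (x @ [s] @ rev x)"
    by (simp add: cox_class_def cox_eq.refl)
  ultimately show "x @ [s] @ rev x \<in> inversions x"
    using inversions_snoc[OF assms(1)] unfolding z_def by blast
qed (rule inversion_imp_descent[OF assms])

lemma descent_exchange:
  assumes "set x \<subseteq> S" and "s \<in> cox_desc S m x"
  shows "\<exists>i<length x. x @ [s] \<simeq> remove_nth i x"
proof -
  have "s \<in> S" using assms(2) unfolding cox_desc_def by simp
  then show ?thesis
    using exchange_condition descent_iff_inversion assms by blast
qed

text \<open>The letters \<open>r, s\<close> go to the two generating reflections of the infinite dihedral group,
  all other letters to the identity; this respects the relations when \<open>m r s = \<infinity>\<close>.\<close>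
lemma dih_word_cong:
  assumes "r \<in> S" and "s \<in> S" and "m r s = \<infinity>"
  shows "u \<simeq> v \<Longrightarrow> dih_word r s u = dih_word r s v"
proof (induction rule: cox_eq.induct)
  case (rel a b k xs ys)
  have "r \<noteq> s" using assms coxeter_matrix unfolding coxeter_matrix_def by auto
  have "dih_word r s (concat (replicate k [a, b])) = (False, 0)"
  proof (rule relator_cases[OF rel])
    assume "concat (replicate k [a, b]) = [a, a]"
    then show ?thesis by (auto simp: dih_gen_def dih_mult_def)
  next
    assume "m a b = 2" and "concat (replicate k [a, b]) = [a, b, a, b]"
    moreover have "{a, b} \<noteq> {r, s}"
      using \<open>m a b = 2\<close> assms coxeter_matrix_sym by (auto simp: doubleton_eq_iff)
    ultimately show ?thesis using \<open>r \<noteq> s\<close> by (auto simp: dih_gen_def dih_mult_def)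
  qed
  then show ?case by (simp add: dih_word_append)
qed simp_all

lemma alternating_length_le:
  assumes "c \<in> S" and "d \<in> S" and "m c d = \<infinity>" and "alternating c d n \<simeq> v"
  shows "n \<le> length v"
proof -
  have "c \<noteq> d" using assms(1,3) coxeter_matrix unfolding coxeter_matrix_def by auto
  then have "int n = dih_length (dih_word c d v)"
    using dih_length_alternating dih_word_cong[OF assms] by metis
  also have "\<dots> \<le> int (length v)" by (rule dih_length_dih_word_le)
  finally show ?thesis by simp
qed

lemma reduced_alternating_suffix:
  assumes "set y \<subseteq> S" and "c \<in> cox_desc S m y" and "d \<in> cox_desc S m y" and "m c d = \<infinity>"
  shows "\<exists>u. set u \<subseteq> S \<and> length u + k = cox_len S m y \<and> u @ alternating c d k \<simeq> y"
  using assms(2-4)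
proof (induction k arbitrary: c d)
  case 0
  obtain v where "set v \<subseteq> S" "length v = cox_len S m y" "v \<simeq> y"
    using reduced_word_exists assms(1) .
  then show ?case by auto
next
  case (Suc k)
  have cd: "c \<in> S" "d \<in> S" using Suc.prems(1,2) unfolding cox_desc_def by auto
  then have "m d c = \<infinity>" using Suc.prems(3) coxeter_matrix_sym by simp
  then obtain u where u: "set u \<subseteq> S" "length u + k = cox_len S m y"
    and uy: "u @ alternating d c k \<simeq> y"
    using Suc.IH Suc.prems(1,2) by blast
  define x where "x = u @ alternating d c k"
  have x: "set x \<subseteq> S" using u(1) set_alternating cd unfolding x_def by fastforce
  have "c \<in> cox_desc S m x" using Suc.prems(1) cox_desc_cong[OF uy] unfolding x_def by simp
  then obtain i where i: "i < length x" "x @ [c] \<simeq> remove_nth i x"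
    using descent_exchange x by blast
  show ?case
  proof (cases "i < length u")
    case True
    have "remove_nth i u @ alternating c d (Suc k) = remove_nth i x @ [c]"
      using True by (simp add: x_def remove_nth_append)
    also have "\<dots> \<simeq> x @ [c, c]"
      using cox_eq_append[OF cox_eq.sym[OF i(2)] cox_eq.refl, of "[c]"] by simp
    also have "\<dots> \<simeq> y"
      using snoc_square_equiv[OF cd(1)] uy unfolding x_def by (rule cox_eq.trans)
    finally show ?thesis
      using True u set_remove_nth_subset[of i u] by (intro exI[of _ "remove_nth i u"])
        (auto simp: length_remove_nth)
  next
    case False
    define j where "j = i - length u"
    have "u @ (alternating d c k @ [c]) \<simeq> u @ remove_nth j (alternating d c k)"
      using i(2) False by (simp add: x_def remove_nth_append j_def)
    then have "alternating c d (Suc k) \<simeq> remove_nth j (alternating d c k)"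
      using cox_eq_cancel_left u(1) by simp
    then have "Suc k \<le> length (remove_nth j (alternating d c k))"
      by (rule alternating_length_le[OF cd Suc.prems(3)])
    moreover have "j < k" using i(1) False unfolding j_def x_def by simp
    ultimately show ?thesis by (simp add: length_remove_nth)
  qed
qed

lemma descents_finite_order:
  assumes "set y \<subseteq> S" and "r \<in> cox_desc S m y" and "s \<in> cox_desc S m y"
  shows "m r s \<noteq> \<infinity>"
proof
  assume "m r s = \<infinity>"
  from reduced_alternating_suffix[OF assms this, of "Suc (cox_len S m y)"]
  show False by auto
qed

lemma descent_after_ascent:
  assumes x: "set x \<subseteq> S" and s: "s \<in> S" and "s \<notin> cox_desc S m x"
    and r_desc: "r \<in> cox_desc S m (x @ [s])" and "r \<noteq> s"
  shows "m r s = 2" and "r \<in> cox_desc S m x"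
proof -
  have r: "r \<in> S" using r_desc unfolding cox_desc_def by simp
  have xs: "set (x @ [s]) \<subseteq> S" using x s by simp
  have "s \<in> cox_desc S m (x @ [s])" using ascent_snoc_descent x s assms(3) .
  then have "m r s \<noteq> \<infinity>" using descents_finite_order[OF xs r_desc] by blast
  then show m2: "m r s = 2"
    using right_angled r s \<open>r \<noteq> s\<close> unfolding right_angled_def by meson
  have "(x @ [s]) @ [r] @ rev (x @ [s]) \<in> inversions (x @ [s])"
    using descent_iff_inversion xs r r_desc by blast
  moreover have "x @ [s, r, s] @ rev x \<simeq> x @ [r] @ rev x"
    using cox_eq_append_cong[OF commuting_conj_equiv[OF s r]] m2 coxeter_matrix_sym[OF r s]
    by simp
  ultimately have "x @ [r] @ rev x \<in> inversions (x @ [s])"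
    using inversions_cox_eq_closed by fastforce
  moreover have "x @ [r] @ rev x \<notin> cox_class (x @ [s] @ rev x)"
  proof
    assume "x @ [r] @ rev x \<in> cox_class (x @ [s] @ rev x)"
    then have "x @ [s] @ rev x \<simeq> x @ [r] @ rev x" by (simp add: cox_class_def)
    then have "[s] @ rev x \<simeq> [r] @ rev x" using cox_eq_cancel_left x by blast
    then have "[s] \<simeq> [r]" using cox_eq_cancel_right[of "rev x" "[s]" "[r]"] x by simp
    then show False using singleton_cox_eq_imp_eq \<open>r \<noteq> s\<close> by blast
  qed
  ultimately have "x @ [r] @ rev x \<in> inversions x"
    using inversions_snoc[OF x] by blast
  then show "r \<in> cox_desc S m x" using descent_iff_inversion x r by blast
qed

lemma descents_along_infinite_path:
  assumes "set w \<subseteq> S" and "t \<noteq> []" and "set t \<subseteq> S" and "hd t \<notin> cox_desc S m w"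
    and "successively (\<lambda>a b. m a b = \<infinity>) t"
  shows "last t \<in> cox_desc S m (w @ t) \<and> cox_desc S m (w @ t) \<subseteq> insert (last t) (S - set t)"
  using assms(2-5)
proof (induction t rule: rev_nonempty_induct)
  case (single a)
  then have "a \<in> cox_desc S m (w @ [a])" using ascent_snoc_descent assms(1) by simp
  then show ?case unfolding cox_desc_def by auto
next
  case (snoc a t)
  let ?b = "last t"
  have a: "a \<in> S" and wt: "set (w @ t) \<subseteq> S" using snoc.prems(1) assms(1) by auto
  have IH: "?b \<in> cox_desc S m (w @ t)" "cox_desc S m (w @ t) \<subseteq> insert ?b (S - set t)"
    using snoc by (auto simp: successively_append_iff)
  have ba: "m ?b a = \<infinity>" using snoc.prems(3) snoc.hyps by (simp add: successively_append_iff)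
  then have "a \<notin> cox_desc S m (w @ t)" using descents_finite_order[OF wt IH(1)] by blast
  then have "a \<in> cox_desc S m ((w @ t) @ [a])" using ascent_snoc_descent wt a by blast
  moreover have "r \<in> insert a (S - set (t @ [a]))" if "r \<in> cox_desc S m ((w @ t) @ [a])" for r
  proof (cases "r = a")
    case False
    then have "m r a = 2" "r \<in> cox_desc S m (w @ t)"
      using descent_after_ascent[OF wt a \<open>a \<notin> cox_desc S m (w @ t)\<close> that] by simp_all
    then have "r \<in> S - set t" using IH(2) ba by auto
    then show ?thesis using False by simp
  qed simp
  ultimately show ?case by auto
qed

end

theorem lemma8p4:
  fixes S :: "'a set" and m :: "'a \<Rightarrow> 'a \<Rightarrow> enat" and w t :: "'a list"
  assumes "coxeter_matrix S m" and "right_angled S m" and "cox_irreducible S m"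
    and "set w \<subseteq> S"
    and "t \<noteq> []"
    and "hd t \<notin> cox_desc S m w"
    and "\<forall>i. i + 1 < length t \<longrightarrow> cox_order_inf S m (t ! i) (t ! (i + 1))"
    and "set t = S"
  shows "w @ t \<in> cox_WT S m {last t}"
proof -
  interpret right_angled_coxeter_system S m
    using assms(1,2) by unfold_locales
  have "m (t ! i) (t ! Suc i) = \<infinity>" if "Suc i < length t" for i
    using that assms(7,8) nth_mem[of i t] nth_mem[of "Suc i" t]
    by (auto intro: cox_order_inf_imp_infinite)
  then have "successively (\<lambda>a b. m a b = \<infinity>) t"
    by (rule successivelyI_nth)
  then have "cox_desc S m (w @ t) = {last t}"
    using descents_along_infinite_path[OF assms(4,5)] assms(6,8) by auto
  then show ?thesis
    using assms(4,8) unfolding cox_WT_def by simp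
qed

end
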